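(* Let $(\hat A,\hat B)$ satisfy $\max\{\|\hat A-A_\star\|,\|\hat B-B_\star\|\}\le\varepsilon_\mathrm{m}$ and let $F\in\mathbb{S}^n_+$ satisfy $\|F-P_\star\|\le\varepsilon$. Assume $m\le n$, $R\succeq I$, $Q\succeq I$, $(A_\star,B_\star)$ stabilizable, $\|A_\star\|,\|B_\star\|,\|P_\star\|\le\Upsilon_\star$ with $\Upsilon_\star\ge\max\{1,\varepsilon_\mathrm{m}\}$, and $\Upsilon_\star\ge\varepsilon$. Then $K=\mathcal{K}_{\hat A,\hat B}(F)$ satisfies $$\|K-K_\star\|\le\frac{\Upsilon_\star^2(\sqrt{\|P_\star\|}+1)(3\varepsilon_\mathrm{m}+4\varepsilon)}{\underline{\sigma}(R)}.$$
   Context: $A_\star\in\mathbb{R}^{n\times n}$, $B_\star\in\mathbb{R}^{n\times m}$; weights $Q\in\mathbb{S}^n_+$, $R\in\mathbb{S}^m_{++}$; $\|\cdot\|$ spectral norm; $\underline{\sigma}$ smallest singular value. $S_B=BR^{-1}B^\top$; Riccati map $\mathcal{R}_{A,B}(P)=A^\top P(I+S_BP)^{-1}A+Q$. $\mathcal{K}_{A,B}(F)=(R+B^\top FB)^{-1}B^\top FA$. $P_\star$ is the unique positive definite solution of $P_\star=\mathcal{R}_{A_\star,B_\star}(P_\star)$, and $K_\star=\mathcal{K}_{A_\star,B_\star}(P_\star)$. *)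

theory Defs
  imports "HOL-Analysis.Analysis"
begin

definition spec_norm :: "real^'m^'n \<Rightarrow> real" where
  "spec_norm M = onorm (\<lambda>x. M *v x)"

definition sigma_min :: "real^'n^'n \<Rightarrow> real" where
  "sigma_min M = Inf {norm (M *v x) | x. norm x = 1}"

definition sym_mat :: "real^'n^'n \<Rightarrow> bool" where
  "sym_mat M \<longleftrightarrow> transpose M = M"

definition psd :: "real^'n^'n \<Rightarrow> bool" where
  "psd M \<longleftrightarrow> sym_mat M \<and> (\<forall>x. 0 \<le> x \<bullet> (M *v x))"

definition pd :: "real^'n^'n \<Rightarrow> bool" where
  "pd M \<longleftrightarrow> sym_mat M \<and> (\<forall>x. x \<noteq> 0 \<longrightarrow> 0 < x \<bullet> (M *v x))"

definition cmat :: "real^'n^'n \<Rightarrow> complex^'n^'n" where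
  "cmat M = (\<chi> i j. complex_of_real (M $ i $ j))"

definition is_eigenvalue :: "real^'n^'n \<Rightarrow> complex \<Rightarrow> bool" where
  "is_eigenvalue M z \<longleftrightarrow> (\<exists>v. v \<noteq> 0 \<and> cmat M *v v = z *s v)"

definition schur_stable :: "real^'n^'n \<Rightarrow> bool" where
  "schur_stable M \<longleftrightarrow> (\<forall>z. is_eigenvalue M z \<longrightarrow> cmod z < 1)"

definition stabilizable :: "real^'n^'n \<Rightarrow> real^'m^'n \<Rightarrow> bool" where
  "stabilizable A B \<longleftrightarrow> (\<exists>K :: real^'n^'m. schur_stable (A - B ** K))"

definition riccati :: "real^'n^'n \<Rightarrow> real^'m^'m \<Rightarrow> real^'n^'n \<Rightarrow> real^'m^'n \<Rightarrow> real^'n^'n \<Rightarrow> real^'n^'n" where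
  "riccati Q R A B P =
     transpose A ** P ** matrix_inv (mat 1 + (B ** matrix_inv R ** transpose B) ** P) ** A + Q"

definition gain :: "real^'m^'m \<Rightarrow> real^'n^'n \<Rightarrow> real^'m^'n \<Rightarrow> real^'n^'n \<Rightarrow> real^'n^'m" where
  "gain R A B F = matrix_inv (R + transpose B ** F ** B) ** transpose B ** F ** A"

end

theory Submission
  imports Defs
begin

text \<open>
  Write \<open>K = gain R A_star B_star P_star\<close> and \<open>M = R + B_hat\<^sup>T F B_hat\<close>.
  The gain equation gives \<open>R K = B_star\<^sup>T P_star (A_star - B_star K)\<close>, hence
  \<open>M (gain R A_hat B_hat F - K) = B_hat\<^sup>T F (A_hat - B_hat K) - B_star\<^sup>T P_star (A_star - B_star K)\<close>,
  whose right-hand side is small by a three-term telescoping estimate. By the Woodbury identity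
  the Riccati equation reads \<open>P_star = A_star\<^sup>T P_star (A_star - B_star K) + Q\<close>, so
  \<open>v\<^sup>T P_star v = v\<^sup>T Q v + (K v)\<^sup>T R (K v) + ((A_star - B_star K) v)\<^sup>T P_star ((A_star - B_star K) v)\<close>;
  with \<open>Q, R \<ge> I\<close> this bounds both \<open>K\<close> and the closed loop \<open>A_star - B_star K\<close> by
  \<open>sqrt \<parallel>P_star\<parallel>\<close>. Finally \<open>M \<ge> R\<close> gives \<open>sigma_min R * |x| \<le> |M x|\<close>.
\<close>

section \<open>Matrix algebra and the spectral norm\<close>

lemma inner_vector_matrix_mult: "(x::real^'a) \<bullet> (y v* A) = (A *v x) \<bullet> (y::real^'b)"
  by (metis dot_lmul_matrix inner_commute)

lemma matrix_add_rdistrib: "((A::'a::ring_1^'n^'m) + B) ** C = A ** C + B ** C"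
  by (simp add: matrix_eq matrix_vector_mul_assoc[symmetric] algebra_simps)

lemma matrix_diff_ldistrib: "(A::'a::ring_1^'n^'m) ** (B - C) = A ** B - A ** C"
  by (simp add: matrix_eq matrix_vector_mul_assoc[symmetric] algebra_simps)

lemma matrix_diff_rdistrib: "((A::'a::ring_1^'n^'m) - B) ** C = A ** C - B ** C"
  by (simp add: matrix_eq matrix_vector_mul_assoc[symmetric] algebra_simps)

lemma transpose_diff: "transpose ((A::'a::ring_1^'n^'m) - B) = transpose A - transpose B"
  by (simp add: transpose_def vec_eq_iff)

lemma
  fixes A :: "'a::semiring_1^'n^'m"
  assumes "invertible A"
  shows matrix_inv_right: "A ** matrix_inv A = mat 1" and matrix_inv_left: "matrix_inv A ** A = mat 1"
  using someI_ex[OF assms[unfolded invertible_def]] by (simp_all add: matrix_inv_def)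

lemma invertible_iff_ker_trivial: "invertible (A::'a::field^'n^'n) \<longleftrightarrow> (\<forall>x. A *v x = 0 \<longrightarrow> x = 0)"
  by (simp add: invertible_left_inverse matrix_left_invertible_ker)

lemma invertible_if_quadratic_pos:
  fixes A :: "real^'n^'n"
  assumes "\<And>x. x \<noteq> 0 \<Longrightarrow> 0 < x \<bullet> (A *v x)"
  shows "invertible A"
  unfolding invertible_iff_ker_trivial using assms by fastforce

lemma norm_le_spec_norm: "norm (A *v x) \<le> spec_norm A * norm (x::real^'a)"
  unfolding spec_norm_def by (rule onorm) simp

lemma spec_norm_nonneg: "0 \<le> spec_norm (A::real^'a^'b)"
  unfolding spec_norm_def by (rule onorm_pos_le) simp

lemma spec_norm_le:
  assumes "\<And>x. norm (A *v x) \<le> b * norm x"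
  shows "spec_norm (A::real^'a^'b) \<le> b"
  unfolding spec_norm_def using assms by (rule onorm_le)

lemma inner_le_spec_norm: "x \<bullet> (A *v x) \<le> spec_norm A * norm (x::real^'a) ^ 2"
proof -
  have "x \<bullet> (A *v x) \<le> norm x * norm (A *v x)" by (rule norm_cauchy_schwarz)
  also have "\<dots> \<le> norm x * (spec_norm A * norm x)" by (simp add: mult_left_mono norm_le_spec_norm)
  finally show ?thesis by (simp add: power2_eq_square algebra_simps)
qed

lemma spec_norm_transpose_le: "spec_norm (transpose A) \<le> spec_norm (A::real^'a^'b)"
proof (rule spec_norm_le)
  fix y :: "real^'b"
  let ?z = "transpose A *v y"
  have "norm ?z ^ 2 = (A *v ?z) \<bullet> y"
    by (simp add: power2_norm_eq_inner inner_vector_matrix_mult)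
  also have "\<dots> \<le> norm (A *v ?z) * norm y" by (rule norm_cauchy_schwarz)
  also have "\<dots> \<le> spec_norm A * norm ?z * norm y"
    by (simp add: mult_right_mono norm_le_spec_norm)
  finally have "norm ?z * norm ?z \<le> (spec_norm A * norm y) * norm ?z"
    by (simp add: power2_eq_square algebra_simps)
  then show "norm ?z \<le> spec_norm A * norm y"
    using spec_norm_nonneg[of A] by (cases "norm ?z = 0") auto
qed

lemma spec_norm_mult_le: "spec_norm (A ** B) \<le> spec_norm A * spec_norm (B::real^'a^'b)"
proof (rule spec_norm_le)
  fix x
  have "norm ((A ** B) *v x) \<le> spec_norm A * norm (B *v x)"
    by (simp add: norm_le_spec_norm flip: matrix_vector_mul_assoc)
  also have "\<dots> \<le> spec_norm A * spec_norm B * norm x"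
    by (simp add: mult.assoc mult_left_mono norm_le_spec_norm spec_norm_nonneg)
  finally show "norm ((A ** B) *v x) \<le> spec_norm A * spec_norm B * norm x" .
qed

lemma spec_norm_mult3_le:
  assumes "spec_norm A \<le> a" "spec_norm B \<le> b" "spec_norm C \<le> (c::real)"
  shows "spec_norm (A ** B ** (C::real^'a^'b)) \<le> a * b * c"
proof -
  have "spec_norm (A ** B ** C) \<le> spec_norm A * spec_norm B * spec_norm C"
    by (meson order_trans spec_norm_mult_le mult_right_mono spec_norm_nonneg)
  also have "\<dots> \<le> a * b * c"
    using assms spec_norm_nonneg[of A] spec_norm_nonneg[of B] spec_norm_nonneg[of C]
    by (intro mult_mono) auto
  finally show ?thesis .
qed

lemma spec_norm_add_le: "spec_norm (A + B) \<le> spec_norm A + spec_norm (B::real^'a^'b)"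
proof (rule spec_norm_le)
  fix x
  have "norm ((A + B) *v x) \<le> norm (A *v x) + norm (B *v x)"
    by (simp add: matrix_vector_mult_add_rdistrib norm_triangle_ineq)
  also have "\<dots> \<le> (spec_norm A + spec_norm B) * norm x"
    using norm_le_spec_norm[of A x] norm_le_spec_norm[of B x] by (simp add: algebra_simps)
  finally show "norm ((A + B) *v x) \<le> (spec_norm A + spec_norm B) * norm x" .
qed

lemma spec_norm_diff_le: "spec_norm (A - B) \<le> spec_norm A + spec_norm (B::real^'a^'b)"
proof (rule spec_norm_le)
  fix x
  have "norm ((A - B) *v x) \<le> norm (A *v x) + norm (B *v x)"
    by (simp add: matrix_vector_mult_diff_rdistrib norm_triangle_ineq4)
  also have "\<dots> \<le> (spec_norm A + spec_norm B) * norm x"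
    using norm_le_spec_norm[of A x] norm_le_spec_norm[of B x] by (simp add: algebra_simps)
  finally show "norm ((A - B) *v x) \<le> (spec_norm A + spec_norm B) * norm x" .
qed

section \<open>Quadratic forms and the smallest singular value\<close>

lemma psd_if_pd: "pd M \<Longrightarrow> psd M"
  unfolding pd_def psd_def by (metis inner_zero_left order_le_less)

lemma inner_le_if_psd_diff_mat_1: "psd (R - mat 1) \<Longrightarrow> (x::real^'a) \<bullet> x \<le> x \<bullet> (R *v x)"
  unfolding psd_def by (auto simp: matrix_vector_mult_diff_rdistrib inner_diff_right)

lemma inner_transpose_mult_mult_nonneg:
  "psd F \<Longrightarrow> 0 \<le> (x::real^'m) \<bullet> ((transpose B ** F ** B) *v x)"
  unfolding psd_def by (simp add: inner_vector_matrix_mult flip: matrix_vector_mul_assoc)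

lemma linear_coeff_eq_0_if_quadratic_nonneg:
  fixes a c :: real
  assumes "\<And>t. 0 \<le> 2 * t * c + t\<^sup>2 * a" "0 \<le> a"
  shows "c = 0"
proof (rule ccontr)
  assume "c \<noteq> 0"
  define t where "t = - c / (a + 1)"
  have "a + 1 > 0" using assms(2) by simp
  then have "t * (a + 1) = - c" by (simp add: t_def)
  then have "(2 * t * c + t\<^sup>2 * a) * (a + 1)\<^sup>2 = - c\<^sup>2 * (a + 2)" by algebra
  also have "\<dots> < 0"
    using assms(2) \<open>c \<noteq> 0\<close> by (simp add: mult_pos_pos)
  finally show False
    using assms(1)[of t] by (smt (verit) mult_nonneg_nonneg zero_le_power2)
qed

lemma psd_kernel_if_quadratic_eq_0:
  fixes D :: "real^'n^'n"
  assumes "sym_mat D" "\<And>x. 0 \<le> x \<bullet> (D *v x)" "v \<bullet> (D *v v) = 0"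
  shows "D *v v = 0"
proof -
  let ?w = "D *v v"
  have sym: "v \<bullet> (D *v ?w) = ?w \<bullet> ?w"
    using assms(1) unfolding sym_mat_def
    by (metis inner_commute inner_vector_matrix_mult transpose_matrix_vector)
  have "?w \<bullet> ?w = 0"
  proof (rule linear_coeff_eq_0_if_quadratic_nonneg)
    fix t
    have "0 \<le> (v + t *\<^sub>R ?w) \<bullet> (D *v (v + t *\<^sub>R ?w))" by (rule assms(2))
    also have "\<dots> = 2 * t * (?w \<bullet> ?w) + t\<^sup>2 * (?w \<bullet> (D *v ?w))"
      using assms(3) sym
      by (simp add: matrix_vector_right_distrib matrix_vector_mult_scaleR inner_add_left
          inner_add_right inner_commute power2_eq_square algebra_simps)
    finally show "0 \<le> 2 * t * (?w \<bullet> ?w) + t\<^sup>2 * (?w \<bullet> (D *v ?w))" .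
  qed (rule assms(2))
  then show ?thesis by simp
qed

lemma scaleR_matrix_vector_mult: "(c *\<^sub>R A) *v x = c *\<^sub>R (A *v (x::real^'n))"
  by (simp add: vec_eq_iff matrix_vector_mult_def sum_distrib_left mult.assoc)

lemma quadratic_form_attains_min_on_sphere:
  fixes R :: "real^'n^'n"
  obtains v where "norm v = 1" "\<And>x. (v \<bullet> (R *v v)) * norm x ^ 2 \<le> x \<bullet> (R *v x)"
proof -
  let ?S = "sphere (0::real^'n) 1"
  have "continuous_on ?S (\<lambda>x. x \<bullet> (R *v x))"
    by (intro continuous_intros linear_continuous_on) simp
  moreover have "axis undefined 1 \<in> ?S" by simp
  ultimately obtain v where v: "v \<in> ?S" "\<And>y. y \<in> ?S \<Longrightarrow> v \<bullet> (R *v v) \<le> y \<bullet> (R *v y)"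
    using continuous_attains_inf[OF compact_sphere] by blast
  have "(v \<bullet> (R *v v)) * norm x ^ 2 \<le> x \<bullet> (R *v x)" for x
  proof (cases "x = 0")
    case False
    then have "v \<bullet> (R *v v) \<le> (x /\<^sub>R norm x) \<bullet> (R *v (x /\<^sub>R norm x))" by (intro v(2)) simp
    also have "\<dots> = (x \<bullet> (R *v x)) / norm x ^ 2"
      by (simp add: matrix_vector_mult_scaleR power2_eq_square divide_inverse)
    finally show ?thesis using False by (simp add: pos_le_divide_eq)
  qed simp
  with v(1) show ?thesis using that by simp
qed

lemma sigma_min_mult_norm_sq_le:
  fixes R :: "real^'n^'n"
  assumes "psd R"
  shows "sigma_min R * norm x ^ 2 \<le> x \<bullet> (R *v x)"
proof -
  obtain v where v: "norm v = 1" and min: "\<And>x. (v \<bullet> (R *v v)) * norm x ^ 2 \<le> x \<bullet> (R *v x)"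
    using quadratic_form_attains_min_on_sphere[of R] by blast
  \<comment> \<open>The minimiser \<open>v\<close> is an eigenvector, \<open>R v = l v\<close>, so \<open>sigma_min R \<le> l\<close>.\<close>
  define l where "l = v \<bullet> (R *v v)"
  define D where "D = R - l *\<^sub>R mat 1"
  have Dx: "D *v x = R *v x - l *\<^sub>R x" for x
    by (simp add: D_def matrix_vector_mult_diff_rdistrib scaleR_matrix_vector_mult)
  have "D *v v = 0"
  proof (rule psd_kernel_if_quadratic_eq_0)
    show "sym_mat D"
      using assms by (simp add: D_def psd_def sym_mat_def transpose_diff transpose_scalar)
    show "0 \<le> x \<bullet> (D *v x)" for x
      using min[of x] by (simp add: Dx l_def inner_diff_right power2_norm_eq_inner)
    show "v \<bullet> (D *v v) = 0"
      using v by (simp add: Dx l_def inner_diff_right power2_norm_eq_inner[symmetric])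
  qed
  then have "R *v v = l *\<^sub>R v" unfolding Dx by simp
  moreover have "0 \<le> l" using assms by (simp add: l_def psd_def)
  ultimately have "norm (R *v v) = l" using v by (simp only: norm_scaleR abs_of_nonneg mult_1_right)
  then have "sigma_min R \<le> l"
    unfolding sigma_min_def using v by (intro cInf_lower bdd_belowI[of _ 0]) auto
  then have "sigma_min R * norm x ^ 2 \<le> l * norm x ^ 2" by (simp add: mult_right_mono)
  also have "\<dots> \<le> x \<bullet> (R *v x)" unfolding l_def by (rule min)
  finally show ?thesis .
qed

lemma one_le_sigma_min:
  assumes "psd (R - mat 1)"
  shows "1 \<le> sigma_min (R::real^'n^'n)"
  unfolding sigma_min_def
proof (rule cInf_greatest)
  show "{norm (R *v x) |x. norm x = 1} \<noteq> {}" using norm_axis_1 by blast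
next
  fix y assume "y \<in> {norm (R *v x) |x. norm x = 1}"
  then obtain x where x: "norm x = 1" "y = norm (R *v x)" by blast
  have "1 = x \<bullet> x" using x(1) by (simp add: power2_norm_eq_inner[symmetric])
  also have "\<dots> \<le> x \<bullet> (R *v x)" by (rule inner_le_if_psd_diff_mat_1[OF assms])
  also have "\<dots> \<le> norm x * norm (R *v x)" by (rule norm_cauchy_schwarz)
  finally show "1 \<le> y" using x by simp
qed

lemma sigma_min_mult_norm_le:
  fixes R N :: "real^'n^'n"
  assumes "psd R" "\<And>x. 0 \<le> x \<bullet> (N *v x)"
  shows "sigma_min R * norm x \<le> norm ((R + N) *v x)"
proof -
  have "sigma_min R * norm x * norm x \<le> x \<bullet> (R *v x)"
    using sigma_min_mult_norm_sq_le[OF assms(1)] by (simp add: power2_eq_square mult.assoc)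
  also have "\<dots> \<le> x \<bullet> ((R + N) *v x)"
    using assms(2)[of x] by (simp add: matrix_vector_mult_add_rdistrib inner_add_right)
  also have "\<dots> \<le> norm ((R + N) *v x) * norm x"
    by (metis mult.commute norm_cauchy_schwarz)
  finally show ?thesis
    by (cases "x = 0") auto
qed

lemma spec_norm_le_div_sigma_min:
  fixes R N :: "real^'n^'n" and X :: "real^'m^'n"
  assumes "psd R" "\<And>x. 0 \<le> x \<bullet> (N *v x)" "0 < sigma_min R"
  shows "spec_norm X \<le> spec_norm ((R + N) ** X) / sigma_min R"
proof (rule spec_norm_le)
  fix x
  have "sigma_min R * norm (X *v x) \<le> norm (((R + N) ** X) *v x)"
    using sigma_min_mult_norm_le[OF assms(1,2)] by (simp flip: matrix_vector_mul_assoc)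
  also have "\<dots> \<le> spec_norm ((R + N) ** X) * norm x" by (rule norm_le_spec_norm)
  finally show "norm (X *v x) \<le> spec_norm ((R + N) ** X) / sigma_min R * norm x"
    using assms(3) by (simp add: pos_le_divide_eq mult.commute mult.left_commute)
qed

section \<open>The Riccati equation\<close>

lemma invertible_if_pd: "pd (M::real^'n^'n) \<Longrightarrow> invertible M"
  unfolding pd_def by (rule invertible_if_quadratic_pos) simp

lemma invertible_gain_denominator:
  fixes R :: "real^'m^'m" and P :: "real^'n^'n" and B :: "real^'m^'n"
  assumes "pd R" "psd P"
  shows "invertible (R + transpose B ** P ** B)"
proof (rule invertible_if_quadratic_pos)
  fix x :: "real^'m" assume "x \<noteq> 0"
  then show "0 < x \<bullet> ((R + transpose B ** P ** B) *v x)"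
    using assms inner_transpose_mult_mult_nonneg[of P x B]
    by (simp add: pd_def matrix_vector_mult_add_rdistrib inner_add_right add_pos_nonneg)
qed

lemma gain_closed_loop:
  fixes R :: "real^'m^'m" and A P :: "real^'n^'n" and B :: "real^'m^'n"
  assumes "pd R" "psd P"
  shows "R ** gain R A B P = transpose B ** P ** (A - B ** gain R A B P)"
proof -
  let ?M = "R + transpose B ** P ** B" and ?K = "gain R A B P"
  have "?M ** ?K = transpose B ** P ** A"
    using matrix_inv_right[OF invertible_gain_denominator[OF assms]]
    by (simp add: gain_def matrix_mul_assoc)
  then show ?thesis
    by (simp add: matrix_add_rdistrib matrix_diff_ldistrib matrix_mul_assoc algebra_simps)
qed

lemma invertible_riccati_factor:
  fixes R :: "real^'m^'m" and P :: "real^'n^'n" and B :: "real^'m^'n"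
  assumes "pd R" "pd P"
  shows "invertible (mat 1 + (B ** matrix_inv R ** transpose B) ** P)"
  unfolding invertible_iff_ker_trivial
proof (intro allI impI)
  fix y assume "(mat 1 + (B ** matrix_inv R ** transpose B) ** P) *v y = 0"
  then have y: "y = - (B *v r)" if "r = matrix_inv R *v (transpose B *v (P *v y))" for r
    using that by (simp add: matrix_vector_mult_add_rdistrib eq_neg_iff_add_eq_0 flip: matrix_vector_mul_assoc)
  define r where "r = matrix_inv R *v (transpose B *v (P *v y))"
  have Rr: "R *v r = transpose B *v (P *v y)"
    using matrix_inv_right[OF invertible_if_pd[OF assms(1)]]
    by (simp add: r_def matrix_vector_mul_assoc matrix_mul_assoc)
  have "y \<bullet> (P *v y) = - (r \<bullet> (R *v r))"
    by (subst (1) y[OF r_def]) (simp add: Rr inner_vector_matrix_mult)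
  also have "\<dots> \<le> 0" using assms(1) by (simp add: pd_def) (metis inner_zero_left order_le_less)
  finally show "y = 0" using assms(2) unfolding pd_def by (meson not_less)
qed

lemma riccati_woodbury:
  fixes R :: "real^'m^'m" and P :: "real^'n^'n" and B :: "real^'m^'n"
  assumes "pd R" "pd P"
  shows "P ** matrix_inv (mat 1 + (B ** matrix_inv R ** transpose B) ** P)
    = P - P ** B ** matrix_inv (R + transpose B ** P ** B) ** transpose B ** P"
  unfolding matrix_eq
proof
  fix z
  let ?X = "mat 1 + (B ** matrix_inv R ** transpose B) ** P" and ?M = "R + transpose B ** P ** B"
  define y where "y = matrix_inv ?X *v z"
  define r where "r = matrix_inv R *v (transpose B *v (P *v y))"
  have "?X *v y = z"
    using matrix_inv_right[OF invertible_riccati_factor[OF assms, of B]]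
    by (simp add: y_def matrix_vector_mul_assoc)
  then have z: "z = y + B *v r"
    by (simp add: r_def matrix_vector_mult_add_rdistrib flip: matrix_vector_mul_assoc)
  have "R *v r = transpose B *v (P *v y)"
    using matrix_inv_right[OF invertible_if_pd[OF assms(1)]]
    by (simp add: r_def matrix_vector_mul_assoc matrix_mul_assoc)
  then have "?M *v r = transpose B *v (P *v z)"
    by (simp add: z matrix_vector_mult_add_rdistrib matrix_vector_right_distrib flip: matrix_vector_mul_assoc)
  then have "matrix_inv ?M *v (transpose B *v (P *v z)) = r"
    using matrix_inv_left[OF invertible_gain_denominator[OF assms(1) psd_if_pd[OF assms(2)]]]
    by (metis matrix_vector_mul_assoc matrix_vector_mul_lid)
  moreover have "P *v y = P *v z - P *v (B *v r)"
    by (simp add: z matrix_vector_right_distrib)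
  ultimately show "(P ** matrix_inv ?X) *v z = (P - P ** B ** matrix_inv ?M ** transpose B ** P) *v z"
    by (simp add: y_def matrix_vector_mult_diff_rdistrib flip: matrix_vector_mul_assoc)
qed

lemma riccati_eq_closed_loop:
  fixes R :: "real^'m^'m" and A P Q :: "real^'n^'n" and B :: "real^'m^'n"
  assumes "pd R" "pd P"
  shows "riccati Q R A B P = transpose A ** P ** (A - B ** gain R A B P) + Q"
proof -
  have "riccati Q R A B P
      = transpose A ** (P ** matrix_inv (mat 1 + (B ** matrix_inv R ** transpose B) ** P)) ** A + Q"
    by (simp add: riccati_def matrix_mul_assoc)
  then show ?thesis
    by (simp add: riccati_woodbury[OF assms] gain_def matrix_diff_ldistrib matrix_diff_rdistrib
        matrix_mul_assoc)
qed

lemma riccati_value_decomposition: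
  fixes R :: "real^'m^'m" and A P Q :: "real^'n^'n" and B :: "real^'m^'n"
  assumes "pd R" "pd P" "P = riccati Q R A B P"
  defines "K \<equiv> gain R A B P"
  shows "v \<bullet> (P *v v) = v \<bullet> (Q *v v) + (K *v v) \<bullet> (R *v (K *v v))
    + ((A - B ** K) *v v) \<bullet> (P *v ((A - B ** K) *v v))"
proof -
  let ?u = "K *v v" and ?l = "(A - B ** K) *v v"
  have "P = transpose A ** P ** (A - B ** K) + Q"
    unfolding K_def by (rule trans[OF assms(3) riccati_eq_closed_loop[OF assms(1,2)]])
  then have "v \<bullet> (P *v v) = (A *v v) \<bullet> (P *v ?l) + v \<bullet> (Q *v v)"
    by (metis inner_add_right inner_vector_matrix_mult matrix_vector_mul_assoc
        matrix_vector_mult_add_rdistrib transpose_matrix_vector)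
  also have "(A *v v) \<bullet> (P *v ?l) = ?l \<bullet> (P *v ?l) + (B *v ?u) \<bullet> (P *v ?l)"
    by (simp add: matrix_vector_mult_diff_rdistrib inner_diff_left flip: matrix_vector_mul_assoc)
  also have "(B *v ?u) \<bullet> (P *v ?l) = ?u \<bullet> ((transpose B ** P ** (A - B ** K)) *v v)"
    by (simp add: inner_vector_matrix_mult flip: matrix_vector_mul_assoc)
  also have "\<dots> = ?u \<bullet> (R *v ?u)"
    using gain_closed_loop[OF assms(1) psd_if_pd[OF assms(2)], of A B]
    by (simp add: K_def matrix_vector_mul_assoc)
  finally show ?thesis by simp
qed

lemma norm_le_sqrt_mult_norm:
  fixes w :: "'a::real_normed_vector" and v :: "'b::real_normed_vector"
  assumes "norm w ^ 2 \<le> p * norm v ^ 2"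
  shows "norm w \<le> sqrt p * norm v"
  using real_sqrt_le_mono[OF assms] by (simp add: real_sqrt_mult)

lemma riccati_gain_spec_norm_le:
  fixes R :: "real^'m^'m" and A P Q :: "real^'n^'n" and B :: "real^'m^'n"
  assumes "pd R" "psd (R - mat 1)" "pd P" "psd (Q - mat 1)" "P = riccati Q R A B P"
  shows "spec_norm (gain R A B P) \<le> sqrt (spec_norm P)"
    and "spec_norm (A - B ** gain R A B P) \<le> sqrt (spec_norm P)"
proof -
  let ?K = "gain R A B P"
  note decomp = riccati_value_decomposition[OF assms(1,3,5)]
  have R: "norm u ^ 2 \<le> u \<bullet> (R *v u)" for u
    using inner_le_if_psd_diff_mat_1[OF assms(2)] by (simp add: power2_norm_eq_inner)
  have Q: "norm v ^ 2 \<le> v \<bullet> (Q *v v)" for v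
    using inner_le_if_psd_diff_mat_1[OF assms(4)] by (simp add: power2_norm_eq_inner)
  have P: "0 \<le> v \<bullet> (P *v v)" for v
    using assms(3) psd_if_pd unfolding psd_def by blast
  have P_ge: "norm v ^ 2 \<le> v \<bullet> (P *v v)" for v
    using decomp[of v] Q[of v] R[of "?K *v v"] P[of "(A - B ** ?K) *v v"]
      zero_le_power2[of "norm (?K *v v)"] by linarith
  have P_le: "v \<bullet> (P *v v) \<le> spec_norm P * norm v ^ 2" for v
    by (rule inner_le_spec_norm)
  show "spec_norm ?K \<le> sqrt (spec_norm P)"
  proof (rule spec_norm_le, rule norm_le_sqrt_mult_norm)
    fix v
    show "norm (?K *v v) ^ 2 \<le> spec_norm P * norm v ^ 2"
      using decomp[of v] Q[of v] R[of "?K *v v"] P[of "(A - B ** ?K) *v v"] P_le[of v]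
      by (smt (verit) zero_le_power2)
  qed
  show "spec_norm (A - B ** ?K) \<le> sqrt (spec_norm P)"
  proof (rule spec_norm_le, rule norm_le_sqrt_mult_norm)
    fix v
    show "norm ((A - B ** ?K) *v v) ^ 2 \<le> spec_norm P * norm v ^ 2"
      using decomp[of v] Q[of v] R[of "?K *v v"] P_ge[of "(A - B ** ?K) *v v"] P_le[of v]
      by (smt (verit) zero_le_power2)
  qed
qed

section \<open>Perturbation of the gain\<close>

lemma gain_perturbation_eq:
  fixes R :: "real^'m^'m" and A Ah P F :: "real^'n^'n" and B Bh :: "real^'m^'n"
    and K :: "real^'n^'m"
  assumes "invertible (R + transpose Bh ** F ** Bh)"
    and "R ** K = transpose B ** P ** (A - B ** K)"
  shows "(R + transpose Bh ** F ** Bh) ** (gain R Ah Bh F - K)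
    = transpose Bh ** F ** (Ah - Bh ** K) - transpose B ** P ** (A - B ** K)"
proof -
  have "(R + transpose Bh ** F ** Bh) ** gain R Ah Bh F = transpose Bh ** F ** Ah"
    using matrix_inv_right[OF assms(1)] by (simp add: gain_def matrix_mul_assoc)
  then show ?thesis
    using assms(2) by (simp add: matrix_diff_ldistrib matrix_add_rdistrib matrix_mul_assoc)
qed

lemma spec_norm_gain_perturbation_le:
  fixes A Ah P F :: "real^'n^'n" and B Bh :: "real^'m^'n" and K :: "real^'n^'m"
  assumes "spec_norm (Ah - A) \<le> em" "spec_norm (Bh - B) \<le> em" "spec_norm (F - P) \<le> e"
    and "spec_norm B \<le> U" "spec_norm K \<le> s" "spec_norm (A - B ** K) \<le> s"
  shows "spec_norm (transpose Bh ** F ** (Ah - Bh ** K) - transpose B ** P ** (A - B ** K))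
    \<le> em * (spec_norm P + e) * (s + (em + em * s)) + U * e * (s + (em + em * s))
      + U * spec_norm P * (em + em * s)"
proof -
  define E where "E = (Ah - A) - (Bh - B) ** K"
  have closed_loop: "Ah - Bh ** K = (A - B ** K) + E"
    by (simp add: E_def matrix_diff_rdistrib)
  have "spec_norm ((Bh - B) ** K) \<le> em * s"
    using assms(2,5) spec_norm_nonneg[of "Bh - B"] spec_norm_nonneg[of K]
    by (meson mult_mono order_trans spec_norm_mult_le)
  then have E: "spec_norm E \<le> em + em * s"
    using assms(1) spec_norm_diff_le[of "Ah - A" "(Bh - B) ** K"] by (simp add: E_def)
  have closed_loop_le: "spec_norm (Ah - Bh ** K) \<le> s + (em + em * s)"
    using E assms(6) spec_norm_add_le[of "A - B ** K" E] by (simp add: closed_loop)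
  have F: "spec_norm F \<le> spec_norm P + e"
    using assms(3) spec_norm_add_le[of P "F - P"] by simp
  have "transpose Bh ** F ** (Ah - Bh ** K) - transpose B ** P ** (A - B ** K)
      = transpose (Bh - B) ** F ** (Ah - Bh ** K) + transpose B ** (F - P) ** (Ah - Bh ** K)
        + transpose B ** P ** E"
    by (simp add: matrix_eq closed_loop transpose_diff matrix_vector_mult_add_rdistrib
        matrix_vector_mult_diff_rdistrib matrix_vector_right_distrib
        vector_matrix_left_distrib vector_matrix_mult_diff_distrib algebra_simps
        flip: matrix_vector_mul_assoc)
  also have "spec_norm \<dots> \<le> spec_norm (transpose (Bh - B) ** F ** (Ah - Bh ** K))
      + spec_norm (transpose B ** (F - P) ** (Ah - Bh ** K)) + spec_norm (transpose B ** P ** E)"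
    by (meson add_mono order_trans order_refl spec_norm_add_le)
  also have "\<dots> \<le> em * (spec_norm P + e) * (s + (em + em * s)) + U * e * (s + (em + em * s))
      + U * spec_norm P * (em + em * s)"
    using assms(2,3,4) E F closed_loop_le
    by (intro add_mono spec_norm_mult3_le order_trans[OF spec_norm_transpose_le]) auto
  finally show ?thesis .
qed

lemma gain_perturbation_bound_arith:
  fixes p U e em s :: real
  assumes "0 \<le> p" "p \<le> U" "0 \<le> e" "e \<le> U" "0 \<le> em" "em \<le> U" "1 \<le> U" "0 \<le> s"
  shows "em * (p + e) * (s + (em + em * s)) + U * e * (s + (em + em * s)) + U * p * (em + em * s)
    \<le> U\<^sup>2 * (s + 1) * (3 * em + 4 * e)"
proof -
  have U2: "U \<le> U\<^sup>2" using assms(7) by (simp add: power2_eq_square)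
  have le_U2: "p \<le> U\<^sup>2" "em \<le> U\<^sup>2" "em * p \<le> U\<^sup>2" "em * em \<le> U\<^sup>2" "U * em \<le> U\<^sup>2" "U * p \<le> U\<^sup>2"
    using assms U2 by (auto simp: power2_eq_square intro: mult_mono order_trans)
  have "em * (p + e) * (s + (em + em * s)) + U * e * (s + (em + em * s)) + U * p * (em + em * s)
      = p * (em * s) + em * (e * s) + (em * p) * (em * (1 + s)) + (em * em) * (e * (1 + s))
        + U * (e * s) + (U * em) * (e * (1 + s)) + (U * p) * (em * (1 + s))"
    by (simp add: algebra_simps)
  also have "\<dots> \<le> U\<^sup>2 * (em * s) + U\<^sup>2 * (e * s) + U\<^sup>2 * (em * (1 + s)) + U\<^sup>2 * (e * (1 + s))
        + U\<^sup>2 * (e * s) + U\<^sup>2 * (e * (1 + s)) + U\<^sup>2 * (em * (1 + s))"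
    using le_U2 U2 assms by (intro add_mono mult_right_mono) auto
  also have "\<dots> = U\<^sup>2 * (s + 1) * (3 * em + 4 * e) - U\<^sup>2 * (em + 2 * e)"
    by (simp add: algebra_simps)
  also have "\<dots> \<le> U\<^sup>2 * (s + 1) * (3 * em + 4 * e)"
    using assms by simp
  finally show ?thesis .
qed

theorem lemma6:
  fixes A_star A_hat :: "real^'n^'n" and B_star B_hat :: "real^'m^'n"
    and Q P_star F :: "real^'n^'n" and R :: "real^'m^'m"
    and eps_m eps Ups :: real
  assumes "CARD('m) \<le> CARD('n)"
    and "psd Q" and "pd R"
    and "psd (Q - mat 1)" and "psd (R - mat 1)"
    and "stabilizable A_star B_star"
    and "pd P_star" and "P_star = riccati Q R A_star B_star P_star"
    and "max (spec_norm (A_hat - A_star)) (spec_norm (B_hat - B_star)) \<le> eps_m"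
    and "psd F" and "spec_norm (F - P_star) \<le> eps"
    and "spec_norm A_star \<le> Ups" and "spec_norm B_star \<le> Ups" and "spec_norm P_star \<le> Ups"
    and "Ups \<ge> max 1 eps_m" and "Ups \<ge> eps"
  shows "spec_norm (gain R A_hat B_hat F - gain R A_star B_star P_star)
    \<le> Ups\<^sup>2 * (sqrt (spec_norm P_star) + 1) * (3 * eps_m + 4 * eps) / sigma_min R"
proof -
  let ?K = "gain R A_star B_star P_star" and ?M = "R + transpose B_hat ** F ** B_hat"
  let ?s = "sqrt (spec_norm P_star)"
  have closed_loop: "R ** ?K = transpose B_star ** P_star ** (A_star - B_star ** ?K)"
    using gain_closed_loop[OF assms(3) psd_if_pd[OF assms(7)]] .
  note K_le = riccati_gain_spec_norm_le[OF assms(3,5,7,4,8)]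
  have "spec_norm (gain R A_hat B_hat F - ?K) \<le> spec_norm (?M ** (gain R A_hat B_hat F - ?K)) / sigma_min R"
    using one_le_sigma_min[OF assms(5)]
    by (intro spec_norm_le_div_sigma_min psd_if_pd[OF assms(3)]
        inner_transpose_mult_mult_nonneg[OF assms(10)]) auto
  also have "\<dots> = spec_norm (transpose B_hat ** F ** (A_hat - B_hat ** ?K)
      - transpose B_star ** P_star ** (A_star - B_star ** ?K)) / sigma_min R"
    using gain_perturbation_eq[OF invertible_gain_denominator[OF assms(3,10)] closed_loop] by simp
  also have "\<dots> \<le> (eps_m * (spec_norm P_star + eps) * (?s + (eps_m + eps_m * ?s))
      + Ups * eps * (?s + (eps_m + eps_m * ?s)) + Ups * spec_norm P_star * (eps_m + eps_m * ?s))
      / sigma_min R"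
    using assms(9,11,13) K_le one_le_sigma_min[OF assms(5)]
    by (intro divide_right_mono spec_norm_gain_perturbation_le) auto
  also have "\<dots> \<le> Ups\<^sup>2 * (?s + 1) * (3 * eps_m + 4 * eps) / sigma_min R"
    using assms(9,11,14-16) one_le_sigma_min[OF assms(5)]
      spec_norm_nonneg[of "A_hat - A_star"] spec_norm_nonneg[of "F - P_star"]
    by (intro divide_right_mono gain_perturbation_bound_arith) (auto intro: spec_norm_nonneg)
  finally show ?thesis .
qed

end
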